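(* Let $\mathcal A$ be a well-structured abstract domain with abstraction function $\alpha:\mathcal Q\to\mathcal A$. For any $R_1,R_2\subseteq\mathcal D(\mathcal H_V)$, if $\alpha_s(R_1)=\alpha_s(R_2)$ then $\alpha(R_1)=\alpha(R_2)$. Consequently $\alpha=\alpha\circ\gamma_s\circ\alpha_s$.
   Context: Fix a finite set $V$ of quantum variables, each a qubit with state space $\mathcal H_q\cong\mathbb C^2$; $\mathcal H_V=\bigotimes_{q\in V}\mathcal H_q$. $\mathcal D(\mathcal H_V)$ is the set of partial density operators on $\mathcal H_V$ (positive operators of trace at most $1$); $\lceil\rho\rceil$ denotes the support (image space) of $\rho$. The concrete domain is $\mathcal Q=2^{\mathcal D(\mathcal H_V)}$ ordered by inclusion. A pair of monotone maps $(\alpha,\gamma)$ between posets is a Galois connection if $c\le\gamma(a)\iff\alpha(c)\le a$, and a Galois embedding if moreover $\alpha\circ\gamma=\mathrm{id}$. A complete lattice $(\mathcal A,\le_{\mathcal A},\vee,\wedge,\bot,\top)$ with monotone $\alpha:\mathcal Q\to\mathcal A$, $\gamma:\mathcal A\to\mathcal Q$ is a well-structured abstract domain if (a) $(\alpha,\gamma)$ is a Galois embedding, and (b) for any family $\rho_i\in\mathcal D(\mathcal H_V)$ and reals $x_i>0$ with $\sum_i x_i\rho_i\in\mathcal D(\mathcal H_V)$, $\alpha(\sum_i x_i\rho_i)=\bigvee_i\alpha(\rho_i)$, where $\alpha(\rho)=\alpha(\{\rho\})$. The subspace domain $\mathcal S(\mathcal H_V)$ is the set of all subspaces of $\mathcal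 H_V$ ordered by inclusion, with join $P\vee Q=\mathrm{span}(P\cup Q)$ and meet $\cap$; its functions are $\gamma_s(P)=\{\rho\in\mathcal D(\mathcal H_V):\lceil\rho\rceil\subseteq P\}$ and $\alpha_s(R)=\bigvee\{\lceil\rho\rceil:\rho\in R\}$. *)

theory Defs
  imports Complex_Main
begin

text \<open>The finite set V of quantum variables is modelled by a finite type 'q.
  Each variable is a qubit, so the computational basis of H_V is indexed by
  assignments 'q \<Rightarrow> bool; vectors of H_V are functions from basis states to
  complex amplitudes, and operators on H_V are matrices in that basis.\<close>

type_synonym 'q basis = "'q \<Rightarrow> bool"
type_synonym 'q vec = "'q basis \<Rightarrow> complex"
type_synonym 'q op = "'q basis \<Rightarrow> 'q basis \<Rightarrow> complex"

definition apply_op :: "('q::finite) op \<Rightarrow> 'q vec \<Rightarrow> 'q vec" where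
  "apply_op A v = (\<lambda>i. \<Sum>j\<in>UNIV. A i j * v j)"

definition inner_vec :: "('q::finite) vec \<Rightarrow> 'q vec \<Rightarrow> complex" where
  "inner_vec u v = (\<Sum>i\<in>UNIV. cnj (u i) * v i)"

definition trace_op :: "('q::finite) op \<Rightarrow> complex" where
  "trace_op A = (\<Sum>i\<in>UNIV. A i i)"

definition positive_op :: "('q::finite) op \<Rightarrow> bool" where
  "positive_op A \<longleftrightarrow> (\<forall>v. inner_vec v (apply_op A v) \<in> \<real> \<and> Re (inner_vec v (apply_op A v)) \<ge> 0)"

definition pdo :: "('q::finite) op set" where
  "pdo = {A. positive_op A \<and> Re (trace_op A) \<le> 1}"

definition supp :: "('q::finite) op \<Rightarrow> 'q vec set" where
  "supp A = range (apply_op A)"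

definition csubspace :: "('q::finite) vec set \<Rightarrow> bool" where
  "csubspace S \<longleftrightarrow> (\<lambda>i. 0) \<in> S \<and> (\<forall>u\<in>S. \<forall>v\<in>S. (\<lambda>i. u i + v i) \<in> S) \<and> (\<forall>c::complex. \<forall>v\<in>S. (\<lambda>i. c * v i) \<in> S)"

definition subspace_Sup :: "('q::finite) vec set set \<Rightarrow> 'q vec set" where
  "subspace_Sup F = \<Inter> {S. csubspace S \<and> \<Union>F \<subseteq> S}"

definition alpha_s :: "('q::finite) op set \<Rightarrow> 'q vec set" where
  "alpha_s R = subspace_Sup (supp ` R)"

definition gamma_s :: "('q::finite) vec set \<Rightarrow> 'q op set" where
  "gamma_s P = {\<rho> \<in> pdo. supp \<rho> \<subseteq> P}"

text \<open>Well-structured abstract domain over the concrete domain Q = 2^D(H_V)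
  (subsets of pdo), with abstract complete lattice 'a.\<close>
definition well_structured ::
  "(('q::finite) op set \<Rightarrow> 'a::complete_lattice) \<Rightarrow> ('a \<Rightarrow> 'q op set) \<Rightarrow> bool" where
  "well_structured \<alpha> \<gamma> \<longleftrightarrow>
     (\<forall>a. \<gamma> a \<subseteq> pdo) \<and>
     (\<forall>c1 c2. c1 \<subseteq> c2 \<and> c2 \<subseteq> pdo \<longrightarrow> \<alpha> c1 \<le> \<alpha> c2) \<and>
     mono \<gamma> \<and>
     (\<forall>c a. c \<subseteq> pdo \<longrightarrow> (c \<subseteq> \<gamma> a \<longleftrightarrow> \<alpha> c \<le> a)) \<and>
     (\<forall>a. \<alpha> (\<gamma> a) = a) \<and>
     (\<forall>(I::nat set) (\<rho>::nat \<Rightarrow> 'q op) (x::nat \<Rightarrow> real).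
        finite I \<and> (\<forall>i\<in>I. \<rho> i \<in> pdo \<and> x i > 0) \<and>
        (\<lambda>a b. \<Sum>i\<in>I. complex_of_real (x i) * \<rho> i a b) \<in> pdo \<longrightarrow>
        \<alpha> {(\<lambda>a b. \<Sum>i\<in>I. complex_of_real (x i) * \<rho> i a b)} = (SUP i\<in>I. \<alpha> {\<rho> i}))"

end

theory Submission
  imports Defs "HOL-Analysis.Convex"
begin

text \<open>Every positive operator \<open>\<rho>\<close> is a finite sum of rank-one operators \<open>v v\<^sup>*\<close> with \<open>v\<close> in
  the range of \<open>\<rho>\<close>. If \<open>supp \<rho> \<subseteq> \<alpha>\<^sub>s(R)\<close>, each such \<open>v\<close> is a finite combination of vectors
  \<open>\<sigma> w\<close> with \<open>\<sigma> \<in> R\<close>, and Cauchy--Schwarz for the positive \<open>\<sigma>\<close> gives \<open>\<rho> \<le> C \<sigma>\<^sub>0\<close>, where \<open>\<sigma>\<^sub>0\<close> is a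
  small positive multiple of the sum of finitely many elements of \<open>R\<close>. Then \<open>\<sigma>\<^sub>0 = e \<rho> + (\<sigma>\<^sub>0 - e \<rho>)\<close>
  is a sum of two partial density operators for small \<open>e > 0\<close>, and the join axiom of a
  well-structured domain yields \<open>\<alpha>{\<rho>} = \<alpha>{e \<rho>} \<le> \<alpha>{\<sigma>\<^sub>0} \<le> \<alpha>(R)\<close>. By the Galois connection,
  \<open>\<alpha>(R\<^sub>1) \<le> \<alpha>(R\<^sub>2)\<close> as soon as all supports of \<open>R\<^sub>1\<close> lie in \<open>\<alpha>\<^sub>s(R\<^sub>2)\<close>, so \<open>\<alpha>\<close> factors through \<open>\<alpha>\<^sub>s\<close>.\<close>

section \<open>The sesquilinear form of an operator\<close>

definition qform :: "('q::finite) op \<Rightarrow> 'q vec \<Rightarrow> 'q vec \<Rightarrow> complex" where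
  "qform A x y = inner_vec x (apply_op A y)"

definition basis_vec :: "('q::finite) basis \<Rightarrow> 'q vec" where
  "basis_vec i = (\<lambda>k. if k = i then 1 else 0)"

lemma qform_expand: "qform A x y = (\<Sum>i\<in>UNIV. \<Sum>j\<in>UNIV. cnj (x i) * A i j * y j)"
  by (simp add: qform_def inner_vec_def apply_op_def sum_distrib_left mult.assoc)

lemma apply_op_basis_vec: "apply_op A (basis_vec j) = (\<lambda>i. A i j)"
proof -
  have "\<And>i k. A i k * (if k = j then 1 else 0) = (if k = j then A i k else 0)" by simp
  then show ?thesis by (simp add: apply_op_def basis_vec_def)
qed

lemma inner_vec_basis_vec: "inner_vec (basis_vec i) v = v i"
proof -
  have "\<And>k. cnj (if k = i then 1 else 0) * v k = (if k = i then v k else 0)" by simp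
  then show ?thesis by (simp add: inner_vec_def basis_vec_def)
qed

lemma qform_basis_vec: "qform A (basis_vec i) (basis_vec j) = A i j"
  by (simp add: qform_def apply_op_basis_vec inner_vec_basis_vec)

lemma qform_basis_vec_right: "qform A x (basis_vec j) = (\<Sum>i\<in>UNIV. cnj (x i) * A i j)"
  by (simp add: qform_def apply_op_basis_vec inner_vec_def)

lemma qform_add_scaled:
  "qform A (\<lambda>i. x i + d * y i) (\<lambda>i. x i + d * y i) =
     qform A x x + d * qform A x y + cnj d * qform A y x + d * cnj d * qform A y y"
  by (simp add: qform_expand algebra_simps sum.distrib sum_distrib_left)

lemma qform_sum_op: "qform (\<lambda>a b. \<Sum>k\<in>I. f k a b) x y = (\<Sum>k\<in>I. qform (f k) x y)"
  by (simp add: qform_expand sum_distrib_left sum_distrib_right sum.swap[of _ I] mult.assoc)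

lemma qform_scale_op: "qform (\<lambda>a b. c * A a b) x y = c * qform A x y"
  by (simp add: qform_expand sum_distrib_left algebra_simps)

lemma qform_weighted_sum_op:
  "qform (\<lambda>a b. \<Sum>k\<in>I. c k * f k a b) x y = (\<Sum>k\<in>I. c k * qform (f k) x y)"
  by (simp only: qform_sum_op qform_scale_op)

lemma qform_diff_op: "qform (\<lambda>a b. A a b - B a b) x y = qform A x y - qform B x y"
  by (simp add: qform_expand algebra_simps sum_subtractf)

lemma qform_outer: "qform (\<lambda>a b. v a * cnj (v b)) x y = inner_vec x v * cnj (inner_vec y v)"
  by (simp add: qform_expand inner_vec_def sum_product mult_ac)

lemma Re_qform_outer: "Re (qform (\<lambda>a b. v a * cnj (v b)) y y) = (cmod (inner_vec y v))\<^sup>2"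
  by (simp add: qform_outer flip: complex_norm_square)

lemma inner_vec_sum_apply_op:
  "inner_vec y (\<lambda>i. \<Sum>\<sigma>\<in>F. apply_op \<sigma> (w \<sigma>) i) = (\<Sum>\<sigma>\<in>F. qform \<sigma> y (w \<sigma>))"
  by (simp add: inner_vec_def qform_def sum_distrib_left sum.swap[of _ F])

lemma apply_op_add: "apply_op A (\<lambda>j. u j + v j) = (\<lambda>i. apply_op A u i + apply_op A v i)"
  by (simp add: apply_op_def algebra_simps sum.distrib)

lemma apply_op_zero: "apply_op A (\<lambda>j. 0) = (\<lambda>i. 0)"
  by (simp add: apply_op_def)

lemma apply_op_scale: "apply_op A (\<lambda>i. s * u i) = (\<lambda>i. s * apply_op A u i)"
  by (simp add: apply_op_def algebra_simps sum_distrib_left)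

lemma apply_op_diff: "apply_op A (\<lambda>i. w i - s * u i) = (\<lambda>i. apply_op A w i - s * apply_op A u i)"
  by (simp add: apply_op_def algebra_simps sum_subtractf sum_distrib_left)

lemma apply_diff_op: "apply_op (\<lambda>a b. A a b - B a b) w = (\<lambda>i. apply_op A w i - apply_op B w i)"
  by (simp add: apply_op_def algebra_simps sum_subtractf)

lemma apply_scaled_outer:
  "apply_op (\<lambda>a b. c * (v a * cnj (v b))) w = (\<lambda>i. c * v i * (\<Sum>l\<in>UNIV. cnj (v l) * w l))"
  by (simp add: apply_op_def sum_distrib_left mult_ac)

lemma trace_op_scale: "trace_op (\<lambda>a b. c * A a b) = c * trace_op A"
  by (simp add: trace_op_def sum_distrib_left)

lemma trace_op_diff: "trace_op (\<lambda>a b. A a b - B a b) = trace_op A - trace_op B"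
  by (simp add: trace_op_def sum_subtractf)

lemma trace_op_sum: "trace_op (\<lambda>a b. \<Sum>k\<in>I. f k a b) = (\<Sum>k\<in>I. trace_op (f k))"
  by (simp add: trace_op_def sum.swap[of _ I])

section \<open>Positive operators\<close>

lemma positive_op_iff_qform: "positive_op A \<longleftrightarrow> (\<forall>x. qform A x x \<in> \<real> \<and> Re (qform A x x) \<ge> 0)"
  by (simp add: positive_op_def qform_def)

lemma positive_op_qform_real: "positive_op A \<Longrightarrow> qform A x x = complex_of_real (Re (qform A x x))"
  unfolding positive_op_iff_qform by (metis Reals_cases Re_complex_of_real)

lemma positive_op_qform_nonneg: "positive_op A \<Longrightarrow> Re (qform A x x) \<ge> 0"
  unfolding positive_op_iff_qform by auto

lemma positive_op_weighted_sum:
  assumes "\<And>k. k \<in> I \<Longrightarrow> positive_op (f k) \<and> c k \<ge> 0"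
  shows "positive_op (\<lambda>a b. \<Sum>k\<in>I. complex_of_real (c k) * f k a b)"
  unfolding positive_op_iff_qform qform_weighted_sum_op
  using assms by (auto simp: positive_op_iff_qform intro!: sum_nonneg)

lemma positive_op_trace_nonneg: "positive_op A \<Longrightarrow> Re (trace_op A) \<ge> 0"
  by (simp add: trace_op_def sum_nonneg positive_op_qform_nonneg flip: qform_basis_vec)

lemma positive_op_hermitian:
  assumes "positive_op A" shows "qform A x y = cnj (qform A y x)"
proof -
  have real: "\<And>z. Im (qform A z z) = 0"
    using positive_op_qform_real[OF assms] by (metis Im_complex_of_real)
  have "Im (qform A x y) + Im (qform A y x) = 0"
    using arg_cong[OF qform_add_scaled[of A x 1 y], of Im] real by simp
  moreover have "Re (qform A x y) - Re (qform A y x) = 0"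
    using arg_cong[OF qform_add_scaled[of A x "\<i>" y], of Im] real by simp
  ultimately show ?thesis by (simp add: complex_eq_iff)
qed

lemma nonneg_quadratic_discriminant:
  fixes a b m :: real
  assumes "b \<ge> 0" "m > 0" and nonneg: "\<And>t. 0 \<le> a + 2 * t * m + t\<^sup>2 * b"
  shows "m\<^sup>2 \<le> a * b"
proof (cases "b = 0")
  case True
  have "0 \<le> a + 2 * (-(a + 1) / (2 * m)) * m"
    using nonneg[of "-(a + 1) / (2 * m)"] True by simp
  with \<open>m > 0\<close> show ?thesis by (simp add: field_simps)
next
  case False
  with \<open>b \<ge> 0\<close> have "b > 0" by simp
  have "0 \<le> a + 2 * (-m / b) * m + (-m / b)\<^sup>2 * b" by (rule nonneg)
  with \<open>b > 0\<close> show ?thesis by (simp add: power2_eq_square field_simps)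
qed

lemma positive_op_Cauchy_Schwarz:
  assumes pos: "positive_op A"
  shows "(cmod (qform A x y))\<^sup>2 \<le> Re (qform A x x) * Re (qform A y y)"
proof (cases "qform A x y = 0")
  case True then show ?thesis using positive_op_qform_nonneg[OF pos] by simp
next
  case False
  define z where "z = qform A x y"
  define c where "c = cnj z / complex_of_real (cmod z)"
  have "cmod z > 0" using False z_def by simp
  then have cz: "c * z = complex_of_real (cmod z)" and cc: "c * cnj c = 1"
    by (simp_all add: c_def complex_norm_square[symmetric] power2_eq_square mult.commute)
  have "0 \<le> Re (qform A x x) + 2 * t * cmod z + t\<^sup>2 * Re (qform A y y)" for t :: real
  proof -
    define d where "d = complex_of_real t * c"
    have "qform A (\<lambda>i. x i + d * y i) (\<lambda>i. x i + d * y i)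
        = qform A x x + d * z + cnj (d * z) + d * cnj d * qform A y y"
      using qform_add_scaled[of A x d y] positive_op_hermitian[OF pos, of y x] z_def by simp
    also have "\<dots> = qform A x x + complex_of_real (2 * t * cmod z) + complex_of_real (t\<^sup>2) * qform A y y"
    proof -
      have "d * z = complex_of_real (t * cmod z)" by (simp add: d_def mult.assoc cz)
      moreover have "d * cnj d = complex_of_real (t\<^sup>2)"
        using cc by (simp add: d_def power2_eq_square mult_ac)
      ultimately show ?thesis by simp
    qed
    finally show ?thesis
      using positive_op_qform_nonneg[OF pos, of "\<lambda>i. x i + d * y i"] by simp
  qed
  then show ?thesis
    unfolding z_def
    using nonneg_quadratic_discriminant positive_op_qform_nonneg[OF pos] \<open>cmod z > 0\<close> z_def
    by blast
qed

lemma positive_op_zero_diagonal: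
  assumes "positive_op A" "A k k = 0"
  shows "A k j = 0"
  using positive_op_Cauchy_Schwarz[OF assms(1), of "basis_vec k" "basis_vec j"] assms(2)
  by (simp add: qform_basis_vec)

lemma positive_op_diagonal:
  assumes "positive_op A"
  shows "A j j = complex_of_real (Re (A j j))" and "Re (A j j) \<ge> 0"
  using positive_op_qform_real[OF assms, of "basis_vec j"]
    positive_op_qform_nonneg[OF assms, of "basis_vec j"]
  by (simp_all add: qform_basis_vec)

lemma qform_remove_column:
  "qform (\<lambda>a b. A a b - complex_of_real (1 / c) * (A a j * cnj (A b j))) x x
     = qform A x x - complex_of_real ((cmod (qform A x (basis_vec j)))\<^sup>2 / c)"
proof -
  have "qform (\<lambda>a b. A a b - complex_of_real (1 / c) * (A a j * cnj (A b j))) x x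
      = qform A x x - complex_of_real (1 / c) * (qform A x (basis_vec j) * cnj (qform A x (basis_vec j)))"
    by (simp only: qform_diff_op qform_scale_op qform_outer qform_basis_vec_right inner_vec_def)
  then show ?thesis by (simp add: complex_norm_square[symmetric] mult.commute)
qed

text \<open>One step of a Cholesky factorisation: removing the rank-one part of \<open>A\<close> through the
  column \<open>j\<close> leaves a positive operator whose diagonal vanishes at \<open>j\<close>, by Cauchy--Schwarz.\<close>

lemma positive_op_remove_column:
  fixes A :: "('q::finite) op"
  assumes pos: "positive_op A" and j: "A j j \<noteq> 0"
    and A'_def: "A' = (\<lambda>a b. A a b - complex_of_real (1 / Re (A j j)) * (A a j * cnj (A b j)))"
  shows "positive_op A'"
    and "{k. A' k k \<noteq> 0} \<subset> {k. A k k \<noteq> 0}"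
    and "range (apply_op A') \<subseteq> range (apply_op A)"
proof -
  define c where "c = Re (A j j)"
  have Ajj: "A j j = complex_of_real c" and "c \<ge> 0"
    unfolding c_def by (fact positive_op_diagonal[OF pos])+
  with j have cpos: "c > 0" by auto
  have qform_A': "qform A' x x = qform A x x - complex_of_real ((cmod (qform A x (basis_vec j)))\<^sup>2 / c)" for x
    unfolding A'_def c_def by (rule qform_remove_column)
  show "positive_op A'"
    unfolding positive_op_iff_qform
  proof
    fix x
    have "(cmod (qform A x (basis_vec j)))\<^sup>2 \<le> Re (qform A x x) * c"
      using positive_op_Cauchy_Schwarz[OF pos, of x "basis_vec j"] by (simp add: qform_basis_vec c_def)
    with cpos have "Re (qform A' x x) \<ge> 0" by (simp add: qform_A' field_simps)
    moreover have "qform A' x x \<in> \<real>"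
      using pos by (simp add: positive_op_iff_qform qform_A')
    ultimately show "qform A' x x \<in> \<real> \<and> 0 \<le> Re (qform A' x x)" by simp
  qed
  have diag: "A' k k = A k k - complex_of_real ((cmod (A k j))\<^sup>2 / c)" for k
    using qform_A'[of "basis_vec k"] by (simp add: qform_basis_vec)
  have "cmod (A j j) = c"
    using Ajj cpos by simp
  then have "A' j j = complex_of_real c - complex_of_real (c\<^sup>2 / c)"
    using diag[of j] by (simp only: Ajj)
  with cpos have "A' j j = 0"
    by (simp add: power2_eq_square)
  moreover have "A' k k = 0" if "A k k = 0" for k
    unfolding diag that positive_op_zero_diagonal[of A, OF pos that] by simp
  ultimately show "{k. A' k k \<noteq> 0} \<subset> {k. A k k \<noteq> 0}"
    using j by blast
  show "range (apply_op A') \<subseteq> range (apply_op A)"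
  proof
    fix y assume "y \<in> range (apply_op A')"
    then obtain w where y: "y = apply_op A' w" by auto
    define s where "s = complex_of_real (1 / c) * (\<Sum>l\<in>UNIV. cnj (A l j) * w l)"
    have "y = apply_op A (\<lambda>i. w i - s * basis_vec j i)"
      unfolding y A'_def apply_diff_op apply_scaled_outer apply_op_diff apply_op_basis_vec
      by (simp add: s_def c_def mult_ac)
    then show "y \<in> range (apply_op A)" by auto
  qed
qed

lemma positive_op_outer_decomposition:
  fixes A :: "('q::finite) op"
  assumes "positive_op A"
  shows "\<exists>(n::nat) v. A = (\<lambda>a b. \<Sum>k<n. v k a * cnj (v k b)) \<and> (\<forall>k<n. v k \<in> range (apply_op A))"
  using assms
proof (induction "card {j. A j j \<noteq> 0}" arbitrary: A rule: less_induct)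
  case less
  show ?case
  proof (cases "\<exists>j. A j j \<noteq> 0")
    case False
    then have "A = (\<lambda>a b. 0)"
      using positive_op_zero_diagonal[of A, OF less.prems] by (intro ext) simp
    then show ?thesis by (intro exI[of _ 0]) simp
  next
    case True
    then obtain j where j: "A j j \<noteq> 0" by blast
    define c where "c = Re (A j j)"
    define A' where "A' = (\<lambda>a b. A a b - complex_of_real (1 / c) * (A a j * cnj (A b j)))"
    note A' = positive_op_remove_column[of A j A', OF less.prems j A'_def[unfolded c_def]]
    from less.hyps[OF psubset_card_mono[OF finite A'(2)] A'(1)] obtain n :: nat and v where
      A'_eq: "A' = (\<lambda>a b. \<Sum>k<n. v k a * cnj (v k b))" and
      v_range: "\<forall>k<n. v k \<in> range (apply_op A')" by blast
    have "c > 0"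
      using j positive_op_diagonal[OF less.prems, of j] unfolding c_def by (metis less_eq_real_def of_real_0)
    define r where "r = complex_of_real (1 / sqrt c)"
    define u where "u = (\<lambda>i. r * A i j)"
    have "r * cnj r = complex_of_real (1 / c)"
      unfolding r_def using \<open>c > 0\<close> by (simp flip: of_real_mult)
    moreover have "u a * cnj (u b) = r * cnj r * (A a j * cnj (A b j))" for a b
      by (simp add: u_def mult_ac)
    ultimately have A_eq: "A a b = A' a b + u a * cnj (u b)" for a b
      by (simp add: A'_def)
    have "u = apply_op A (\<lambda>i. r * basis_vec j i)"
      by (simp add: apply_op_scale apply_op_basis_vec u_def)
    then have "u \<in> range (apply_op A)" by auto
    show ?thesis
    proof (intro exI[of _ "Suc n"] exI[of _ "v(n := u)"] conjI allI impI)
      show "A = (\<lambda>a b. \<Sum>k<Suc n. (v(n := u)) k a * cnj ((v(n := u)) k b))"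
      proof (intro ext)
        fix a b
        have "(\<Sum>k<n. (v(n := u)) k a * cnj ((v(n := u)) k b)) = A' a b"
          unfolding A'_eq by (intro sum.cong) auto
        then show "A a b = (\<Sum>k<Suc n. (v(n := u)) k a * cnj ((v(n := u)) k b))"
          by (simp add: A_eq)
      qed
      show "(v(n := u)) k \<in> range (apply_op A)" if "k < Suc n" for k
        using that v_range A'(3) \<open>u \<in> range (apply_op A)\<close> by (auto simp: less_Suc_eq)
    qed
  qed
qed

section \<open>The span of the supports\<close>

definition op_range_span :: "('q::finite) op set \<Rightarrow> 'q vec set" where
  "op_range_span R =
     {x. \<exists>F w. finite F \<and> F \<subseteq> R \<and> x = (\<lambda>i. \<Sum>\<sigma>\<in>F. apply_op \<sigma> (w \<sigma>) i)}"

lemma csubspace_op_range_span: "csubspace (op_range_span R)"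
  unfolding csubspace_def
proof (intro conjI ballI allI)
  show "(\<lambda>i. 0) \<in> op_range_span R"
    unfolding op_range_span_def by (intro CollectI exI[of _ "{}"]) simp
next
  fix u v assume u: "u \<in> op_range_span R" and v: "v \<in> op_range_span R"
  obtain F w where F: "finite F" "F \<subseteq> R" and u_eq: "u = (\<lambda>i. \<Sum>\<sigma>\<in>F. apply_op \<sigma> (w \<sigma>) i)"
    using u unfolding op_range_span_def by blast
  obtain G w' where G: "finite G" "G \<subseteq> R" and v_eq: "v = (\<lambda>i. \<Sum>\<sigma>\<in>G. apply_op \<sigma> (w' \<sigma>) i)"
    using v unfolding op_range_span_def by blast
  define w'' where
    "w'' = (\<lambda>\<sigma> j. (if \<sigma> \<in> F then w \<sigma> j else 0) + (if \<sigma> \<in> G then w' \<sigma> j else 0))"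
  have apply_w'': "apply_op \<sigma> (w'' \<sigma>) i = (if \<sigma> \<in> F then apply_op \<sigma> (w \<sigma>) i else 0)
      + (if \<sigma> \<in> G then apply_op \<sigma> (w' \<sigma>) i else 0)" for \<sigma> i
    by (simp add: w''_def apply_op_add apply_op_zero)
  have "(\<Sum>\<sigma>\<in>F \<union> G. apply_op \<sigma> (w'' \<sigma>) i) = u i + v i" for i
  proof -
    have "(\<Sum>\<sigma>\<in>F \<union> G. apply_op \<sigma> (w'' \<sigma>) i)
        = (\<Sum>\<sigma>\<in>F \<union> G. if \<sigma> \<in> F then apply_op \<sigma> (w \<sigma>) i else 0)
        + (\<Sum>\<sigma>\<in>F \<union> G. if \<sigma> \<in> G then apply_op \<sigma> (w' \<sigma>) i else 0)"
      unfolding apply_w'' by (rule sum.distrib)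
    also have "\<dots> = u i + v i"
      using F G by (simp add: u_eq v_eq sum.inter_restrict[symmetric] Int_absorb1)
    finally show ?thesis .
  qed
  then show "(\<lambda>i. u i + v i) \<in> op_range_span R"
    unfolding op_range_span_def using F G by (intro CollectI exI[of _ "F \<union> G"] exI[of _ w'']) auto
next
  fix c :: complex and v assume "v \<in> op_range_span R"
  then obtain F w where F: "finite F" "F \<subseteq> R" and v_eq: "v = (\<lambda>i. \<Sum>\<sigma>\<in>F. apply_op \<sigma> (w \<sigma>) i)"
    unfolding op_range_span_def by blast
  have "(\<lambda>i. c * v i) = (\<lambda>i. \<Sum>\<sigma>\<in>F. apply_op \<sigma> (\<lambda>j. c * w \<sigma> j) i)"
    by (simp add: v_eq apply_op_scale sum_distrib_left)
  then show "(\<lambda>i. c * v i) \<in> op_range_span R"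
    unfolding op_range_span_def using F by (intro CollectI exI[of _ F] exI[of _ "\<lambda>\<sigma> j. c * w \<sigma> j"]) simp
qed

lemma supp_subset_op_range_span: "\<sigma> \<in> R \<Longrightarrow> supp \<sigma> \<subseteq> op_range_span R"
  unfolding supp_def op_range_span_def
  by (auto intro!: exI[of _ "{\<sigma>}"])

lemma alpha_s_subset_op_range_span: "alpha_s R \<subseteq> op_range_span R"
  unfolding alpha_s_def subspace_Sup_def
  by (rule Inter_lower) (use csubspace_op_range_span supp_subset_op_range_span in blast)

lemma supp_subset_alpha_s: "\<rho> \<in> R \<Longrightarrow> supp \<rho> \<subseteq> alpha_s R"
  unfolding alpha_s_def subspace_Sup_def by (rule Inter_greatest) auto

lemma op_range_span_bound:
  assumes x: "x \<in> op_range_span R" and R: "\<forall>\<sigma>\<in>R. positive_op \<sigma>"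
  shows "\<exists>F. finite F \<and> F \<subseteq> R \<and>
           (\<exists>C\<ge>0. \<forall>y. (cmod (inner_vec y x))\<^sup>2 \<le> C * (\<Sum>\<sigma>\<in>F. Re (qform \<sigma> y y)))"
proof -
  obtain F w where F: "finite F" "F \<subseteq> R" and x_eq: "x = (\<lambda>i. \<Sum>\<sigma>\<in>F. apply_op \<sigma> (w \<sigma>) i)"
    using x unfolding op_range_span_def by blast
  have pos: "positive_op \<sigma>" if "\<sigma> \<in> F" for \<sigma> using F R that by blast
  define M where "M = (\<Sum>\<sigma>\<in>F. Re (qform \<sigma> (w \<sigma>) (w \<sigma>)))"
  have M_nonneg: "M \<ge> 0"
    unfolding M_def by (intro sum_nonneg positive_op_qform_nonneg pos)
  have M_ge: "Re (qform \<sigma> (w \<sigma>) (w \<sigma>)) \<le> M" if "\<sigma> \<in> F" for \<sigma>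
    unfolding M_def using F(1) that pos positive_op_qform_nonneg by (intro member_le_sum) auto
  have "(cmod (inner_vec y x))\<^sup>2 \<le> M * card F * (\<Sum>\<sigma>\<in>F. Re (qform \<sigma> y y))" for y
  proof -
    have "(cmod (inner_vec y x))\<^sup>2 = (cmod (\<Sum>\<sigma>\<in>F. qform \<sigma> y (w \<sigma>)))\<^sup>2"
      by (simp add: x_eq inner_vec_sum_apply_op)
    also have "\<dots> \<le> (\<Sum>\<sigma>\<in>F. cmod (qform \<sigma> y (w \<sigma>)))\<^sup>2"
      by (intro power_mono norm_sum) simp
    also have "\<dots> \<le> (\<Sum>\<sigma>\<in>F. (cmod (qform \<sigma> y (w \<sigma>)))\<^sup>2) * card F"
      by (rule sum_squared_le_sum_of_squares)
    also have "\<dots> \<le> (\<Sum>\<sigma>\<in>F. M * Re (qform \<sigma> y y)) * card F"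
    proof (intro mult_right_mono sum_mono)
      fix \<sigma> assume "\<sigma> \<in> F"
      then have "(cmod (qform \<sigma> y (w \<sigma>)))\<^sup>2 \<le> Re (qform \<sigma> y y) * Re (qform \<sigma> (w \<sigma>) (w \<sigma>))"
        by (intro positive_op_Cauchy_Schwarz pos)
      also have "\<dots> \<le> Re (qform \<sigma> y y) * M"
        using \<open>\<sigma> \<in> F\<close> by (intro mult_left_mono M_ge positive_op_qform_nonneg pos)
      finally show "(cmod (qform \<sigma> y (w \<sigma>)))\<^sup>2 \<le> M * Re (qform \<sigma> y y)"
        by (simp add: mult.commute)
    qed simp
    finally show ?thesis by (simp add: sum_distrib_left mult_ac)
  qed
  then show ?thesis
    using F M_nonneg by (intro exI[of _ F] conjI exI[of _ "M * card F"]) auto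
qed

lemma positive_op_dominated_by_finite_subset:
  assumes R: "\<forall>\<sigma>\<in>R. positive_op \<sigma>" and pos: "positive_op \<rho>" and supp: "supp \<rho> \<subseteq> alpha_s R"
  obtains F C where "finite F" "F \<subseteq> R" "C \<ge> 0"
    "\<And>y. Re (qform \<rho> y y) \<le> C * (\<Sum>\<sigma>\<in>F. Re (qform \<sigma> y y))"
proof -
  obtain n :: nat and v where \<rho>_eq: "\<rho> = (\<lambda>a b. \<Sum>k<n. v k a * cnj (v k b))"
    and v_range: "\<forall>k<n. v k \<in> range (apply_op \<rho>)"
    using positive_op_outer_decomposition[OF pos] by blast
  have "v k \<in> op_range_span R" if "k < n" for k
    using v_range that supp alpha_s_subset_op_range_span unfolding supp_def by blast
  then have "\<forall>k\<in>{..<n}. \<exists>F. finite F \<and> F \<subseteq> R \<and>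
      (\<exists>C\<ge>0. \<forall>y. (cmod (inner_vec y (v k)))\<^sup>2 \<le> C * (\<Sum>\<sigma>\<in>F. Re (qform \<sigma> y y)))"
    using op_range_span_bound R by blast
  from bchoice[OF this] obtain FF where FF: "\<forall>k\<in>{..<n}. finite (FF k) \<and> FF k \<subseteq> R \<and>
      (\<exists>C\<ge>0. \<forall>y. (cmod (inner_vec y (v k)))\<^sup>2 \<le> C * (\<Sum>\<sigma>\<in>FF k. Re (qform \<sigma> y y)))"
    by blast
  then have "\<forall>k\<in>{..<n}. \<exists>C\<ge>0.
      \<forall>y. (cmod (inner_vec y (v k)))\<^sup>2 \<le> C * (\<Sum>\<sigma>\<in>FF k. Re (qform \<sigma> y y))"
    by blast
  from bchoice[OF this] obtain CC where CC: "\<forall>k\<in>{..<n}. CC k \<ge> 0 \<and>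
      (\<forall>y. (cmod (inner_vec y (v k)))\<^sup>2 \<le> CC k * (\<Sum>\<sigma>\<in>FF k. Re (qform \<sigma> y y)))"
    by blast
  define F where "F = (\<Union>k<n. FF k)"
  have F: "finite F" "F \<subseteq> R" unfolding F_def using FF by auto
  have sum_FF_le: "(\<Sum>\<sigma>\<in>FF k. Re (qform \<sigma> y y)) \<le> (\<Sum>\<sigma>\<in>F. Re (qform \<sigma> y y))" if "k < n" for k y
    using F R that by (intro sum_mono2) (auto simp: F_def positive_op_qform_nonneg)
  show ?thesis
  proof (rule that[OF F, of "\<Sum>k<n. CC k"])
    show "0 \<le> (\<Sum>k<n. CC k)" using CC by (intro sum_nonneg) blast
    fix y
    have "Re (qform \<rho> y y) = (\<Sum>k<n. (cmod (inner_vec y (v k)))\<^sup>2)"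
      by (simp add: \<rho>_eq qform_sum_op Re_qform_outer)
    also have "\<dots> \<le> (\<Sum>k<n. CC k * (\<Sum>\<sigma>\<in>F. Re (qform \<sigma> y y)))"
    proof (rule sum_mono)
      fix k assume "k \<in> {..<n}"
      then show "(cmod (inner_vec y (v k)))\<^sup>2 \<le> CC k * (\<Sum>\<sigma>\<in>F. Re (qform \<sigma> y y))"
        using CC sum_FF_le[of k y] by (meson lessThan_iff mult_left_mono order_trans)
    qed
    finally show "Re (qform \<rho> y y) \<le> (\<Sum>k<n. CC k) * (\<Sum>\<sigma>\<in>F. Re (qform \<sigma> y y))"
      by (simp add: sum_distrib_right)
  qed
qed

section \<open>Well-structured abstract domains\<close>

lemma pdo_iff: "\<rho> \<in> pdo \<longleftrightarrow> positive_op \<rho> \<and> Re (trace_op \<rho>) \<le> 1"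
  by (simp add: pdo_def)

lemma pdo_scale:
  assumes "\<rho> \<in> pdo" "0 \<le> e" "e \<le> 1"
  shows "(\<lambda>a b. complex_of_real e * \<rho> a b) \<in> pdo"
proof -
  have "Re (trace_op \<rho>) \<ge> 0" "Re (trace_op \<rho>) \<le> 1"
    using assms(1) positive_op_trace_nonneg by (auto simp: pdo_iff)
  then have "e * Re (trace_op \<rho>) \<le> 1"
    using assms(2,3) by (metis mult_le_one)
  moreover have "positive_op (\<lambda>a b. complex_of_real e * \<rho> a b)"
    using assms(1,2) unfolding pdo_iff positive_op_iff_qform qform_scale_op by simp
  ultimately show ?thesis
    by (simp add: pdo_iff trace_op_scale)
qed

lemma pdo_average:
  assumes "finite F" "F \<subseteq> pdo"
  shows "(\<lambda>a b. \<Sum>\<sigma>\<in>F. complex_of_real (1 / (card F + 1)) * \<sigma> a b) \<in> pdo"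
proof -
  have "positive_op (\<lambda>a b. \<Sum>\<sigma>\<in>F. complex_of_real (1 / (card F + 1)) * \<sigma> a b)"
    using assms(2) by (intro positive_op_weighted_sum) (auto simp: pdo_iff)
  moreover have "Re (trace_op (\<lambda>a b. \<Sum>\<sigma>\<in>F. complex_of_real (1 / (card F + 1)) * \<sigma> a b))
      = (\<Sum>\<sigma>\<in>F. Re (trace_op \<sigma>) / (card F + 1))"
    unfolding trace_op_sum trace_op_scale by simp
  moreover have "(\<Sum>\<sigma>\<in>F. Re (trace_op \<sigma>) / (card F + 1)) \<le> (\<Sum>\<sigma>\<in>F. 1 / (card F + 1))"
    using assms(2) by (intro sum_mono divide_right_mono) (auto simp: pdo_iff)
  moreover have "(\<Sum>\<sigma>\<in>F. 1 / (card F + 1)) \<le> (1::real)"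
    by simp
  ultimately show ?thesis
    unfolding pdo_iff by linarith
qed

lemma well_structured_galois:
  "well_structured \<alpha> \<gamma> \<Longrightarrow> c \<subseteq> pdo \<Longrightarrow> c \<subseteq> \<gamma> a \<longleftrightarrow> \<alpha> c \<le> a"
  unfolding well_structured_def by blast

lemma well_structured_mono:
  "well_structured \<alpha> \<gamma> \<Longrightarrow> c1 \<subseteq> c2 \<Longrightarrow> c2 \<subseteq> pdo \<Longrightarrow> \<alpha> c1 \<le> \<alpha> c2"
  unfolding well_structured_def by blast

lemma well_structured_alpha_sum:
  assumes "well_structured \<alpha> \<gamma>" "finite (I::nat set)" "\<forall>i\<in>I. \<rho> i \<in> pdo \<and> x i > 0"
    "(\<lambda>a b. \<Sum>i\<in>I. complex_of_real (x i) * \<rho> i a b) \<in> pdo"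
  shows "\<alpha> {(\<lambda>a b. \<Sum>i\<in>I. complex_of_real (x i) * \<rho> i a b)} = (SUP i\<in>I. \<alpha> {\<rho> i})"
  using assms unfolding well_structured_def by blast

lemma well_structured_alpha_scale:
  assumes ws: "well_structured \<alpha> \<gamma>" and "\<rho> \<in> pdo" "0 < e" "e \<le> 1"
  shows "\<alpha> {\<lambda>a b. complex_of_real e * \<rho> a b} = \<alpha> {\<rho>}"
proof -
  have "(\<lambda>a b. complex_of_real e * \<rho> a b) \<in> pdo"
    using assms by (intro pdo_scale) auto
  then show ?thesis
    using well_structured_alpha_sum[OF ws, of "{0}" "\<lambda>_. \<rho>" "\<lambda>_. e"] assms by simp
qed

lemma well_structured_alpha_summand_le:
  assumes ws: "well_structured \<alpha> \<gamma>" and "\<rho> \<in> pdo" "\<tau> \<in> pdo" "(\<lambda>a b. \<rho> a b + \<tau> a b) \<in> pdo"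
  shows "\<alpha> {\<rho>} \<le> \<alpha> {\<lambda>a b. \<rho> a b + \<tau> a b}"
proof -
  have "\<alpha> {\<lambda>a b. \<rho> a b + \<tau> a b} = (SUP i\<in>{0::nat, 1}. \<alpha> {if i = 0 then \<rho> else \<tau>})"
    using well_structured_alpha_sum[OF ws, of "{0, 1}" "\<lambda>i. if i = 0 then \<rho> else \<tau>" "\<lambda>_. 1"] assms
    by simp
  then show ?thesis by simp
qed

text \<open>Writing \<open>\<sigma> = e \<rho> + (\<sigma> - e \<rho>)\<close> with \<open>e = 1 / (C + 1)\<close>, both summands are partial density
  operators, so the join axiom applies twice.\<close>

lemma well_structured_alpha_le_of_dominated:
  assumes ws: "well_structured \<alpha> \<gamma>" and \<rho>: "\<rho> \<in> pdo" and \<sigma>: "\<sigma> \<in> pdo" and "C > 0"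
    and dominated: "\<And>y. Re (qform \<rho> y y) \<le> C * Re (qform \<sigma> y y)"
  shows "\<alpha> {\<rho>} \<le> \<alpha> {\<sigma>}"
proof -
  define e where "e = 1 / (C + 1)"
  have e: "0 < e" "e \<le> 1" "e * C \<le> 1" using \<open>C > 0\<close> by (simp_all add: e_def)
  define \<rho>' where "\<rho>' = (\<lambda>a b. complex_of_real e * \<rho> a b)"
  have \<rho>': "\<rho>' \<in> pdo" unfolding \<rho>'_def using \<rho> e by (intro pdo_scale) auto
  have "Re (qform \<rho>' y y) \<le> Re (qform \<sigma> y y)" for y
  proof -
    have "Re (qform \<rho>' y y) \<le> e * C * Re (qform \<sigma> y y)"
      using dominated[of y] e by (simp add: \<rho>'_def qform_scale_op mult.assoc)
    also have "\<dots> \<le> Re (qform \<sigma> y y)"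
      using e \<open>C > 0\<close> \<sigma> positive_op_qform_nonneg by (intro mult_left_le_one_le) (auto simp: pdo_iff)
    finally show ?thesis .
  qed
  moreover have "qform \<rho>' y y \<in> \<real>" "qform \<sigma> y y \<in> \<real>" for y
    using \<rho>' \<sigma> by (simp_all add: pdo_iff positive_op_iff_qform)
  moreover have "Re (trace_op \<rho>') \<ge> 0"
    using \<rho>' positive_op_trace_nonneg by (auto simp: pdo_iff)
  ultimately have rest: "(\<lambda>a b. \<sigma> a b - \<rho>' a b) \<in> pdo"
    using \<sigma> by (auto simp: pdo_iff positive_op_iff_qform qform_diff_op trace_op_diff)
  have "\<alpha> {\<rho>} = \<alpha> {\<rho>'}"
    unfolding \<rho>'_def using well_structured_alpha_scale[OF ws \<rho> e(1,2)] ..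
  also have "\<dots> \<le> \<alpha> {\<lambda>a b. \<rho>' a b + (\<sigma> a b - \<rho>' a b)}"
    using well_structured_alpha_summand_le[OF ws \<rho>' rest] \<sigma> by simp
  finally show ?thesis by simp
qed

lemma well_structured_alpha_average_le:
  assumes ws: "well_structured \<alpha> \<gamma>" and "finite F" "F \<subseteq> R" "R \<subseteq> pdo"
  shows "\<alpha> {\<lambda>a b. \<Sum>\<sigma>\<in>F. complex_of_real (1 / (card F + 1)) * \<sigma> a b} \<le> \<alpha> R"
proof -
  obtain h where h: "bij_betw h {0..<card F} F"
    using ex_bij_betw_nat_finite[OF \<open>finite F\<close>] by blast
  have h_in: "h i \<in> pdo" if "i < card F" for i
  proof -
    have "h i \<in> F" using h that by (auto dest: bij_betwE)
    then show ?thesis using assms by blast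
  qed
  have reindex: "(\<lambda>a b. \<Sum>\<sigma>\<in>F. complex_of_real (1 / (card F + 1)) * \<sigma> a b)
      = (\<lambda>a b. \<Sum>i\<in>{0..<card F}. complex_of_real (1 / (card F + 1)) * h i a b)"
  proof (intro ext)
    fix a b
    show "(\<Sum>\<sigma>\<in>F. complex_of_real (1 / (card F + 1)) * \<sigma> a b)
        = (\<Sum>i\<in>{0..<card F}. complex_of_real (1 / (card F + 1)) * h i a b)"
      using sum.reindex_bij_betw[OF h, of "\<lambda>\<sigma>. complex_of_real (1 / (card F + 1)) * \<sigma> a b"] by simp
  qed
  have "\<alpha> {\<lambda>a b. \<Sum>i\<in>{0..<card F}. complex_of_real (1 / (card F + 1)) * h i a b}
      = (SUP i\<in>{0..<card F}. \<alpha> {h i})"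
    using h_in assms pdo_average[of F] reindex
    by (intro well_structured_alpha_sum[OF ws]) auto
  also have "\<dots> \<le> \<alpha> R"
    using h assms by (intro SUP_least well_structured_mono[OF ws]) (auto dest!: bij_betwE)
  finally show ?thesis unfolding reindex .
qed

lemma well_structured_alpha_singleton_le:
  assumes ws: "well_structured \<alpha> \<gamma>" and R: "R \<subseteq> pdo" and \<rho>: "\<rho> \<in> pdo"
    and supp: "supp \<rho> \<subseteq> alpha_s R"
  shows "\<alpha> {\<rho>} \<le> \<alpha> R"
proof -
  have "\<forall>\<sigma>\<in>R. positive_op \<sigma>" "positive_op \<rho>" using R \<rho> by (auto simp: pdo_iff)
  then obtain F C where F: "finite F" "F \<subseteq> R" and "C \<ge> 0"
    and dominated: "\<And>y. Re (qform \<rho> y y) \<le> C * (\<Sum>\<sigma>\<in>F. Re (qform \<sigma> y y))"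
    using positive_op_dominated_by_finite_subset[of R \<rho>] supp by blast
  define \<sigma> where "\<sigma> = (\<lambda>a b. \<Sum>\<sigma>\<in>F. complex_of_real (1 / (card F + 1)) * \<sigma> a b)"
  have \<sigma>: "\<sigma> \<in> pdo" unfolding \<sigma>_def using F R pdo_average by blast
  have "Re (qform \<rho> y y) \<le> (C * (card F + 1) + 1) * Re (qform \<sigma> y y)" for y
  proof -
    have "Re (qform \<sigma> y y) = (\<Sum>\<tau>\<in>F. Re (qform \<tau> y y)) / (card F + 1)"
      unfolding \<sigma>_def qform_weighted_sum_op by (simp add: sum_divide_distrib)
    then have "Re (qform \<rho> y y) \<le> C * (card F + 1) * Re (qform \<sigma> y y)"
      using dominated[of y] by simp
    also have "\<dots> \<le> (C * (card F + 1) + 1) * Re (qform \<sigma> y y)"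
      using \<sigma> positive_op_qform_nonneg[of \<sigma> y] by (simp add: pdo_iff distrib_right)
    finally show ?thesis .
  qed
  then have "\<alpha> {\<rho>} \<le> \<alpha> {\<sigma>}"
    using \<open>C \<ge> 0\<close> by (intro well_structured_alpha_le_of_dominated[OF ws \<rho> \<sigma>]) (auto intro: add_nonneg_pos)
  also have "\<alpha> {\<sigma>} \<le> \<alpha> R"
    unfolding \<sigma>_def using F R by (rule well_structured_alpha_average_le[OF ws])
  finally show ?thesis .
qed

lemma well_structured_alpha_le_of_supp:
  assumes ws: "well_structured \<alpha> \<gamma>" and "R1 \<subseteq> pdo" "R2 \<subseteq> pdo"
    and supp: "\<And>\<rho>. \<rho> \<in> R1 \<Longrightarrow> supp \<rho> \<subseteq> alpha_s R2"
  shows "\<alpha> R1 \<le> \<alpha> R2"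
proof -
  have "\<rho> \<in> \<gamma> (\<alpha> R2)" if "\<rho> \<in> R1" for \<rho>
  proof -
    have "\<alpha> {\<rho>} \<le> \<alpha> R2"
      using that assms by (intro well_structured_alpha_singleton_le[OF ws]) auto
    then show ?thesis
      using well_structured_galois[OF ws, of "{\<rho>}"] that assms by auto
  qed
  then have "R1 \<subseteq> \<gamma> (\<alpha> R2)" by blast
  then show ?thesis using well_structured_galois[OF ws \<open>R1 \<subseteq> pdo\<close>] by blast
qed

theorem mainTheorem2:
  fixes \<alpha> :: "('q::finite) op set \<Rightarrow> 'a::complete_lattice"
    and \<gamma> :: "'a \<Rightarrow> 'q op set"
  assumes "well_structured \<alpha> \<gamma>"
  shows "(\<forall>R1 R2. R1 \<subseteq> pdo \<and> R2 \<subseteq> pdo \<and> alpha_s R1 = alpha_s R2 \<longrightarrow> \<alpha> R1 = \<alpha> R2)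
       \<and> (\<forall>R. R \<subseteq> pdo \<longrightarrow> \<alpha> R = \<alpha> (gamma_s (alpha_s R)))"
proof (intro conjI allI impI)
  fix R1 R2 :: "'q op set"
  assume "R1 \<subseteq> pdo \<and> R2 \<subseteq> pdo \<and> alpha_s R1 = alpha_s R2"
  then show "\<alpha> R1 = \<alpha> R2"
    by (intro order_antisym well_structured_alpha_le_of_supp[OF assms])
      (use supp_subset_alpha_s in blast)+
next
  fix R :: "'q op set"
  assume R: "R \<subseteq> pdo"
  have G: "gamma_s (alpha_s R) \<subseteq> pdo" and RG: "R \<subseteq> gamma_s (alpha_s R)"
    using R supp_subset_alpha_s by (auto simp: gamma_s_def)
  show "\<alpha> R = \<alpha> (gamma_s (alpha_s R))"
  proof (rule order_antisym)
    show "\<alpha> R \<le> \<alpha> (gamma_s (alpha_s R))"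
      using RG by (intro well_structured_alpha_le_of_supp[OF assms R G] supp_subset_alpha_s) blast
    show "\<alpha> (gamma_s (alpha_s R)) \<le> \<alpha> R"
      by (intro well_structured_alpha_le_of_supp[OF assms G R]) (simp add: gamma_s_def)
  qed
qed

end
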